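(* Let $q\in\mathbb{C}\setminus\{0\}$ with $|q|\ne1$, $n\in\mathbb{N}$, $r\in(0,+\infty]$. Then $\mathcal{O}_q(\mathbb{D}_r^n)=\mathcal{O}_q(\mathbb{B}_r^n)$ as subspaces of the space of formal series $\sum_{k\in\mathbb{Z}_+^n}c_kx^k$ and as Fréchet algebras. Moreover, for each $\rho\in(0,r)$, on this algebra $$(|q|^{-2};|q|^{-2})_\infty^{n/2}\,\|\cdot\|_{\mathbb{D},\rho}\le\|\cdot\|_{\mathbb{B},\rho}\le\|\cdot\|_{\mathbb{D},\rho}\quad\text{if }|q|>1,$$ $$(|q|^{2};|q|^{2})_\infty^{n/2}\,\|\cdot\|_{\mathbb{D},\rho}\le\|\cdot\|_{\mathbb{B},\rho}\le\|\cdot\|_{\mathbb{D},\rho}\quad\text{if }|q|<1.$$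
   Context: $\mathcal{O}_q^{\mathrm{reg}}(\mathbb{C}^n)$: algebra generated by $x_1,\dots,x_n$ with $x_ix_j=qx_jx_i$ ($i<j$); basis $x^k=x_1^{k_1}\cdots x_n^{k_n}$, $k\in\mathbb{Z}_+^n$. Put $w_q(k)=1$ if $|q|\ge1$ and $w_q(k)=|q|^{\sum_{i<j}k_ik_j}$ if $|q|<1$; $u_q(k)=|q|^{\sum_{i<j}k_ik_j}$; $[m]_q=1+\dots+q^{m-1}$, $[m]_q!=[1]_q\cdots[m]_q$, $[0]_q!=1$, $[k]_q!=\prod_i[k_i]_q!$, $|k|=\sum k_i$; $(a;t)_\infty=\prod_{j\ge0}(1-at^j)$ for $|t|<1$. For $f=\sum_kc_kx^k$: $\|f\|_{\mathbb{D},\rho}=\sum_k|c_k|w_q(k)\rho^{|k|}$ and $\|f\|_{\mathbb{B},\rho}=\sum_k|c_k|\big([k]_{|q|^2}!/[|k|]_{|q|^2}!\big)^{1/2}u_q(k)\rho^{|k|}$. $\mathcal{O}_q(\mathbb{D}_r^n)$ (resp. $\mathcal{O}_q(\mathbb{B}_r^n)$) is the completion of $\mathcal{O}_q^{\mathrm{reg}}(\mathbb{C}^n)$ with respect to the submultiplicative norms $\|\cdot\|_{\mathbb{D},\rho}$ (resp. $\|\cdot\|_{\mathbb{B},\rho}$), $\rho\in(0,r)$; concretely it is the Fréchet algebra of formal series $\sum_kc_kx^k$ with all these norms finite, with multiplication extending that of $\mathcal{O}_q^{\mathrm{reg}}(\mathbb{C}^n)$. *)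

theory Defs
  imports "HOL-Analysis.Analysis"
begin

text \<open>Multi-indices k in Z_+^n are functions nat => nat vanishing outside {0..<n}
  (coordinates indexed 0..n-1). A formal series sum_k c_k x^k is its coefficient function
  c :: (nat => nat) => complex, required to vanish outside the multi-indices.\<close>

definition multi_idx :: "nat \<Rightarrow> (nat \<Rightarrow> nat) set" where
  "multi_idx n = {k. \<forall>i\<ge>n. k i = 0}"

definition mabs :: "nat \<Rightarrow> (nat \<Rightarrow> nat) \<Rightarrow> nat" where
  "mabs n k = (\<Sum>i<n. k i)"

definition cross :: "nat \<Rightarrow> (nat \<Rightarrow> nat) \<Rightarrow> nat" where
  "cross n k = (\<Sum>i<n. \<Sum>j\<in>{i<..<n}. k i * k j)"

definition qint :: "real \<Rightarrow> nat \<Rightarrow> real" where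
  "qint t m = (\<Sum>j<m. t ^ j)"

definition qfact :: "real \<Rightarrow> nat \<Rightarrow> real" where
  "qfact t m = (\<Prod>i\<in>{1..m}. qint t i)"

definition mqfact :: "real \<Rightarrow> nat \<Rightarrow> (nat \<Rightarrow> nat) \<Rightarrow> real" where
  "mqfact t n k = (\<Prod>i<n. qfact t (k i))"

definition wq :: "complex \<Rightarrow> nat \<Rightarrow> (nat \<Rightarrow> nat) \<Rightarrow> real" where
  "wq q n k = (if norm q \<ge> 1 then 1 else norm q ^ cross n k)"

definition uq :: "complex \<Rightarrow> nat \<Rightarrow> (nat \<Rightarrow> nat) \<Rightarrow> real" where
  "uq q n k = norm q ^ cross n k"

definition termD :: "complex \<Rightarrow> nat \<Rightarrow> real \<Rightarrow> ((nat \<Rightarrow> nat) \<Rightarrow> complex) \<Rightarrow> (nat \<Rightarrow> nat) \<Rightarrow> real" where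
  "termD q n \<rho> c k = norm (c k) * wq q n k * \<rho> ^ mabs n k"

definition termB :: "complex \<Rightarrow> nat \<Rightarrow> real \<Rightarrow> ((nat \<Rightarrow> nat) \<Rightarrow> complex) \<Rightarrow> (nat \<Rightarrow> nat) \<Rightarrow> real" where
  "termB q n \<rho> c k = norm (c k)
     * sqrt (mqfact ((norm q)\<^sup>2) n k / qfact ((norm q)\<^sup>2) (mabs n k))
     * uq q n k * \<rho> ^ mabs n k"

definition normD :: "complex \<Rightarrow> nat \<Rightarrow> real \<Rightarrow> ((nat \<Rightarrow> nat) \<Rightarrow> complex) \<Rightarrow> real" where
  "normD q n \<rho> c = (\<Sum>\<^sub>\<infinity>k\<in>multi_idx n. termD q n \<rho> c k)"

definition normB :: "complex \<Rightarrow> nat \<Rightarrow> real \<Rightarrow> ((nat \<Rightarrow> nat) \<Rightarrow> complex) \<Rightarrow> real" where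
  "normB q n \<rho> c = (\<Sum>\<^sub>\<infinity>k\<in>multi_idx n. termB q n \<rho> c k)"

definition OqD :: "complex \<Rightarrow> nat \<Rightarrow> ereal \<Rightarrow> ((nat \<Rightarrow> nat) \<Rightarrow> complex) set" where
  "OqD q n r = {c. (\<forall>k. k \<notin> multi_idx n \<longrightarrow> c k = 0) \<and>
      (\<forall>\<rho>. 0 < \<rho> \<and> ereal \<rho> < r \<longrightarrow> termD q n \<rho> c summable_on multi_idx n)}"

definition OqB :: "complex \<Rightarrow> nat \<Rightarrow> ereal \<Rightarrow> ((nat \<Rightarrow> nat) \<Rightarrow> complex) set" where
  "OqB q n r = {c. (\<forall>k. k \<notin> multi_idx n \<longrightarrow> c k = 0) \<and>
      (\<forall>\<rho>. 0 < \<rho> \<and> ereal \<rho> < r \<longrightarrow> termB q n \<rho> c summable_on multi_idx n)}"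

definition qpoch :: "real \<Rightarrow> real \<Rightarrow> real" where
  "qpoch a t = (\<Prod>j. 1 - a * t ^ j)"

end

theory Submission
  imports Defs
begin

(*
  Put s = |q|^2 if |q| < 1 and s = |q|^-2 if |q| > 1, so 0 < s < 1. The B-weight of x^k is the
  D-weight times sqrt([k]_s! / [|k|]_s!): for |q| < 1 this is the definition, and for |q| > 1 the
  reflection [m]_t! = t^(m choose 2) [m]_(1/t)! together with
  (|k| choose 2) = sum_i (k_i choose 2) + sum_(i<j) k_i k_j absorbs the factor |q|^(sum_(i<j) k_i k_j).
  In Pochhammer form [k]_s! / [|k|]_s! = prod_i (s;s)_(k_i) / (s;s)_|k|, which lies between
  (s;s)_inf^n and 1 since (s;s)_a (s;s)_b <= (s;s)_(a+b) and (s;s)_inf <= (s;s)_m <= 1.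
  Two nonnegative series that are termwise comparable up to a positive constant converge together,
  and the norms inherit the termwise bounds.
*)

definition qpoch_partial :: "real \<Rightarrow> nat \<Rightarrow> real" where
  "qpoch_partial s m = (\<Prod>j<m. 1 - s * s ^ j)"

lemma qint_eq_geometric: "t \<noteq> 1 \<Longrightarrow> qint t m = (1 - t ^ m) / (1 - t)"
  unfolding qint_def by (simp add: sum_gp_strict)

lemma qfact_Suc: "qfact t (Suc m) = qfact t m * qint t (Suc m)"
  unfolding qfact_def by (simp add: prod.nat_ivl_Suc' mult.commute)

lemma qfact_eq_qpoch_partial:
  assumes "t \<noteq> 1"
  shows "qfact t m = qpoch_partial t m / (1 - t) ^ m"
proof (induction m)
  case 0
  show ?case by (simp add: qfact_def qpoch_partial_def)
next
  case (Suc m)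
  have "qpoch_partial t (Suc m) = qpoch_partial t m * (1 - t ^ Suc m)"
    by (simp add: qpoch_partial_def)
  with Suc assms show ?case
    by (simp only: qfact_Suc qint_eq_geometric[OF assms]) (simp add: field_simps)
qed

lemma qint_Suc_reflect:
  assumes "t \<noteq> 0"
  shows "qint t (Suc m) = t ^ m * qint (inverse t) (Suc m)"
proof -
  have "qint t (Suc m) = (\<Sum>j<Suc m. t ^ (m - j))"
    unfolding qint_def by (subst sum.nat_diff_reindex[symmetric]) simp
  also have "\<dots> = (\<Sum>j<Suc m. t ^ m * inverse t ^ j)"
    using assms by (intro sum.cong) (auto simp: power_diff power_inverse divide_inverse)
  also have "\<dots> = t ^ m * qint (inverse t) (Suc m)"
    unfolding qint_def by (rule sum_distrib_left[symmetric])
  finally show ?thesis .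
qed

lemma choose_two_Suc: "Suc m choose 2 = (m choose 2) + m"
  by (simp add: numeral_2_eq_2)

lemma choose_two_add: "(a + b) choose 2 = (a choose 2) + (b choose 2) + a * b"
  by (induction b) (simp_all add: choose_two_Suc)

lemma qfact_reflect:
  assumes "t \<noteq> 0"
  shows "qfact t m = t ^ (m choose 2) * qfact (inverse t) m"
proof (induction m)
  case 0
  show ?case by (simp add: qfact_def binomial_eq_0)
next
  case (Suc m)
  then show ?case
    by (simp add: qfact_Suc qint_Suc_reflect[OF assms] choose_two_Suc power_add)
qed

lemma mabs_Suc: "mabs (Suc n) k = mabs n k + k n"
  by (simp add: mabs_def)

lemma cross_Suc: "cross (Suc n) k = cross n k + mabs n k * k n"
proof -
  have "(\<Sum>j\<in>{i<..<Suc n}. k i * k j) = (\<Sum>j\<in>{i<..<n}. k i * k j) + k i * k n"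
    if "i < n" for i
  proof -
    have "{i<..<Suc n} = insert n {i<..<n}"
      using that by auto
    then show ?thesis by simp
  qed
  then have "cross (Suc n) k = (\<Sum>i<n. (\<Sum>j\<in>{i<..<n}. k i * k j) + k i * k n)"
    by (simp add: cross_def)
  then show ?thesis
    by (simp add: sum.distrib cross_def mabs_def sum_distrib_right)
qed

lemma sum_choose_two_add_cross: "(\<Sum>i<n. k i choose 2) + cross n k = mabs n k choose 2"
proof (induction n)
  case 0
  show ?case by (simp add: cross_def mabs_def)
next
  case (Suc n)
  then show ?case
    by (simp add: cross_Suc mabs_Suc choose_two_add)
qed

definition qmultinomial_recip :: "real \<Rightarrow> nat \<Rightarrow> (nat \<Rightarrow> nat) \<Rightarrow> real" where
  "qmultinomial_recip t n k = mqfact t n k / qfact t (mabs n k)"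

lemma qmultinomial_recip_reflect:
  assumes "t \<noteq> 0"
  shows "qmultinomial_recip t n k * t ^ cross n k = qmultinomial_recip (inverse t) n k"
proof -
  define e where "e = (\<Sum>i<n. k i choose 2)"
  have "mqfact t n k = t ^ e * mqfact (inverse t) n k"
    by (simp add: e_def mqfact_def qfact_reflect[OF assms] prod.distrib power_sum)
  moreover have "qfact t (mabs n k) = t ^ e * t ^ cross n k * qfact (inverse t) (mabs n k)"
    by (simp add: qfact_reflect[OF assms] e_def flip: sum_choose_two_add_cross power_add)
  ultimately show ?thesis
    using assms by (simp add: qmultinomial_recip_def)
qed

lemma qmultinomial_recip_eq_qpoch_partial:
  assumes "t \<noteq> 1"
  shows "qmultinomial_recip t n k = (\<Prod>i<n. qpoch_partial t (k i)) / qpoch_partial t (mabs n k)"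
proof -
  have "(1 - t) ^ mabs n k = (\<Prod>i<n. (1 - t) ^ k i)"
    by (simp add: mabs_def power_sum)
  with assms show ?thesis
    by (simp add: qmultinomial_recip_def mqfact_def qfact_eq_qpoch_partial prod_dividef)
qed

context
  fixes s :: real
  assumes s: "0 < s" "s < 1"
begin

lemma qpoch_factor_pos: "0 < 1 - s * s ^ j"
  using power_Suc_less_one[OF s] by simp

lemma qpoch_factor_le_one: "1 - s * s ^ j \<le> 1"
  using s by simp

lemma qpoch_partial_pos: "0 < qpoch_partial s m"
  unfolding qpoch_partial_def using qpoch_factor_pos by (simp add: prod_pos)

lemma qpoch_partial_le_one: "qpoch_partial s m \<le> 1"
  unfolding qpoch_partial_def
  using qpoch_factor_pos qpoch_factor_le_one by (simp add: prod_le_1 less_imp_le)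

lemma qpoch_partial_mult_le_add: "qpoch_partial s a * qpoch_partial s b \<le> qpoch_partial s (a + b)"
proof (induction b)
  case 0
  show ?case by (simp add: qpoch_partial_def)
next
  case (Suc b)
  have "1 - s * s ^ b \<le> 1 - s * s ^ (a + b)"
    using s by (simp add: power_decreasing)
  with Suc have "qpoch_partial s a * qpoch_partial s b * (1 - s * s ^ b)
      \<le> qpoch_partial s (a + b) * (1 - s * s ^ (a + b))"
    using qpoch_factor_pos qpoch_partial_pos by (intro mult_mono) (auto simp: less_imp_le)
  then show ?case
    by (simp add: qpoch_partial_def mult.assoc)
qed

lemma prod_qpoch_partial_le: "(\<Prod>i<n. qpoch_partial s (k i)) \<le> qpoch_partial s (mabs n k)"
proof (induction n)
  case 0
  show ?case by (simp add: qpoch_partial_def mabs_def)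
next
  case (Suc n)
  have "(\<Prod>i<Suc n. qpoch_partial s (k i)) \<le> qpoch_partial s (mabs n k) * qpoch_partial s (k n)"
    using Suc qpoch_partial_pos by (simp add: less_imp_le mult_right_mono)
  also have "\<dots> \<le> qpoch_partial s (mabs (Suc n) k)"
    by (simp add: mabs_Suc qpoch_partial_mult_le_add)
  finally show ?case .
qed

lemma convergent_prod_qpoch: "convergent_prod (\<lambda>j. 1 - s * s ^ j)"
proof -
  have "summable (\<lambda>j. norm ((1 - s * s ^ j) - 1))"
    using s by (simp add: summable_geometric summable_mult)
  then show ?thesis
    by (intro abs_convergent_prod_imp_convergent_prod summable_imp_abs_convergent_prod)
qed

lemma qpoch_le_qpoch_partial: "qpoch s s \<le> qpoch_partial s m"
  unfolding qpoch_def
proof (rule prodinf_le_const[OF convergent_prod_qpoch])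
  fix N
  assume "m \<le> N"
  then have "(\<Prod>j<N. 1 - s * s ^ j) = qpoch_partial s m * (\<Prod>j\<in>{m..<N}. 1 - s * s ^ j)"
    unfolding qpoch_partial_def by (metis prod.atLeastLessThan_concat lessThan_atLeast0 zero_le)
  also have "\<dots> \<le> qpoch_partial s m"
    using qpoch_factor_pos qpoch_factor_le_one qpoch_partial_pos[of m]
    by (intro mult_left_le prod_le_1) (auto simp: less_imp_le)
  finally show "(\<Prod>j<N. 1 - s * s ^ j) \<le> qpoch_partial s m" .
qed

lemma qpoch_pos: "0 < qpoch s s"
  unfolding qpoch_def
  by (rule has_prod_pos[OF convergent_prod_has_prod[OF convergent_prod_qpoch] qpoch_factor_pos])

lemma qmultinomial_recip_bounds:
  "qpoch s s ^ n \<le> qmultinomial_recip s n k \<and> qmultinomial_recip s n k \<le> 1"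
proof -
  let ?P = "\<Prod>i<n. qpoch_partial s (k i)"
  have "qpoch s s ^ n \<le> ?P"
    using prod_mono[of "{..<n}" "\<lambda>_. qpoch s s" "\<lambda>i. qpoch_partial s (k i)"]
      qpoch_le_qpoch_partial qpoch_pos by (simp add: less_imp_le)
  also have "?P \<le> ?P / qpoch_partial s (mabs n k)"
    using qpoch_partial_pos qpoch_partial_le_one
    by (simp add: le_divide_eq prod_nonneg less_imp_le mult_left_le)
  finally show ?thesis
    using s prod_qpoch_partial_le qpoch_partial_pos[of "mabs n k"]
    by (simp add: qmultinomial_recip_eq_qpoch_partial)
qed

lemma sqrt_qmultinomial_recip_bounds:
  "qpoch s s powr (real n / 2) \<le> sqrt (qmultinomial_recip s n k)
     \<and> sqrt (qmultinomial_recip s n k) \<le> 1"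
proof -
  have "sqrt (qpoch s s ^ n) = (qpoch s s powr real n) powr (1 / 2)"
    using qpoch_pos by (simp add: powr_half_sqrt powr_realpow)
  then have "qpoch s s powr (real n / 2) = sqrt (qpoch s s ^ n)"
    by (simp add: powr_powr)
  then show ?thesis
    using qmultinomial_recip_bounds by (simp add: real_sqrt_le_mono)
qed

end

lemma summable_on_iff_of_comparable:
  fixes f g :: "'a \<Rightarrow> real"
  assumes "0 < C" and f_nonneg: "\<And>x. x \<in> A \<Longrightarrow> 0 \<le> f x"
    and lower: "\<And>x. x \<in> A \<Longrightarrow> C * f x \<le> g x" and upper: "\<And>x. x \<in> A \<Longrightarrow> g x \<le> f x"
  shows "g summable_on A \<longleftrightarrow> f summable_on A"
proof
  assume "g summable_on A"
  then have "(\<lambda>x. inverse C * g x) summable_on A"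
    by (rule summable_on_cmult_right)
  then show "f summable_on A"
  proof (rule summable_on_comparison_test)
    fix x
    assume "x \<in> A"
    with lower[of x] \<open>0 < C\<close> show "f x \<le> inverse C * g x"
      by (simp add: field_simps)
  qed (rule f_nonneg)
next
  assume "f summable_on A"
  then show "g summable_on A"
  proof (rule summable_on_comparison_test)
    fix x
    assume "x \<in> A"
    with f_nonneg[of x] lower[of x] \<open>0 < C\<close> show "0 \<le> g x"
      by (meson less_imp_le mult_nonneg_nonneg order_trans)
  qed (rule upper)
qed

lemma infsum_bounds_of_comparable:
  fixes f g :: "'a \<Rightarrow> real"
  assumes "0 < C" and "\<And>x. x \<in> A \<Longrightarrow> 0 \<le> f x"
    and lower: "\<And>x. x \<in> A \<Longrightarrow> C * f x \<le> g x" and upper: "\<And>x. x \<in> A \<Longrightarrow> g x \<le> f x"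
    and f: "f summable_on A"
  shows "C * infsum f A \<le> infsum g A \<and> infsum g A \<le> infsum f A"
proof -
  have g: "g summable_on A"
    using summable_on_iff_of_comparable[OF assms(1-4)] f by (rule iffD2)
  have "C * infsum f A = (\<Sum>\<^sub>\<infinity>x\<in>A. C * f x)"
    by (rule infsum_cmult_right'[symmetric])
  also have "\<dots> \<le> infsum g A"
    using summable_on_cmult_right[OF f] g lower by (rule infsum_mono)
  finally have "C * infsum f A \<le> infsum g A" .
  moreover have "infsum g A \<le> infsum f A"
    using g f upper by (rule infsum_mono)
  ultimately show ?thesis ..
qed

definition qbase :: "complex \<Rightarrow> real" where
  "qbase q = (if norm q > 1 then inverse ((norm q)\<^sup>2) else (norm q)\<^sup>2)"

lemma qbase_pos: "q \<noteq> 0 \<Longrightarrow> 0 < qbase q"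
  by (simp add: qbase_def)

lemma qbase_less_one:
  assumes "q \<noteq> 0" and "norm q \<noteq> 1"
  shows "qbase q < 1"
proof (cases "norm q > 1")
  case True
  then have "1 < (norm q)\<^sup>2"
    by (simp add: one_less_power)
  with True show ?thesis
    by (simp add: qbase_def inverse_less_1_iff)
next
  case False
  with assms have "norm q < 1" "0 < norm q"
    by auto
  with False show ?thesis
    by (simp add: qbase_def power_less_one_iff)
qed

lemma termB_eq_termD_mult:
  assumes "norm q \<noteq> 1"
  shows "termB q n \<rho> c k = termD q n \<rho> c k * sqrt (qmultinomial_recip (qbase q) n k)"
proof (cases "norm q > 1")
  case False
  with assms show ?thesis
    by (simp add: termB_def termD_def qbase_def wq_def uq_def qmultinomial_recip_def)
next
  case True
  define t where "t = (norm q)\<^sup>2"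
  have "t \<noteq> 0" and "qbase q = inverse t"
    using True by (auto simp: t_def qbase_def)
  have "t ^ cross n k = (norm q ^ cross n k)\<^sup>2"
    by (simp add: t_def mult.commute flip: power_mult)
  then have "norm q ^ cross n k = sqrt (t ^ cross n k)"
    by simp
  then have "sqrt (qmultinomial_recip t n k) * norm q ^ cross n k
      = sqrt (qmultinomial_recip t n k * t ^ cross n k)"
    by (simp only: real_sqrt_mult)
  also have "\<dots> = sqrt (qmultinomial_recip (qbase q) n k)"
    by (simp only: qmultinomial_recip_reflect[OF \<open>t \<noteq> 0\<close>] \<open>qbase q = inverse t\<close>)
  finally have "sqrt (qmultinomial_recip t n k) * norm q ^ cross n k
      = sqrt (qmultinomial_recip (qbase q) n k)" .
  with True show ?thesis
    by (simp add: termB_def termD_def wq_def uq_def qmultinomial_recip_def t_def mult_ac)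
qed

lemma termD_nonneg: "0 \<le> \<rho> \<Longrightarrow> 0 \<le> termD q n \<rho> c k"
  by (simp add: termD_def wq_def)

lemma termB_bounds:
  assumes "q \<noteq> 0" and "norm q \<noteq> 1" and "0 \<le> \<rho>"
  shows "qpoch (qbase q) (qbase q) powr (real n / 2) * termD q n \<rho> c k \<le> termB q n \<rho> c k"
    and "termB q n \<rho> c k \<le> termD q n \<rho> c k"
  using sqrt_qmultinomial_recip_bounds[OF qbase_pos[OF assms(1)] qbase_less_one[OF assms(1,2)]]
    termD_nonneg[OF assms(3)]
  by (auto simp: termB_eq_termD_mult[OF assms(2)] mult.commute mult_left_mono mult_left_le)

theorem theorem4p2:
  fixes q :: complex and n :: nat and r :: ereal
  assumes "q \<noteq> 0" and "norm q \<noteq> 1" and "0 < r"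
  shows "OqD q n r = OqB q n r \<and>
    (\<forall>\<rho>. 0 < \<rho> \<and> ereal \<rho> < r \<longrightarrow> (\<forall>c\<in>OqD q n r.
       (norm q > 1 \<longrightarrow>
          qpoch (inverse ((norm q)\<^sup>2)) (inverse ((norm q)\<^sup>2)) powr (real n / 2) * normD q n \<rho> c
            \<le> normB q n \<rho> c \<and> normB q n \<rho> c \<le> normD q n \<rho> c) \<and>
       (norm q < 1 \<longrightarrow>
          qpoch ((norm q)\<^sup>2) ((norm q)\<^sup>2) powr (real n / 2) * normD q n \<rho> c
            \<le> normB q n \<rho> c \<and> normB q n \<rho> c \<le> normD q n \<rho> c)))"
proof -
  define C where "C = qpoch (qbase q) (qbase q) powr (real n / 2)"
  have "0 < C"
    using qpoch_pos[OF qbase_pos[OF assms(1)] qbase_less_one[OF assms(1,2)]] by (simp add: C_def)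
  have comparable: "0 \<le> termD q n \<rho> c k" "C * termD q n \<rho> c k \<le> termB q n \<rho> c k"
    "termB q n \<rho> c k \<le> termD q n \<rho> c k" if "0 < \<rho>" for \<rho> c k
    using termD_nonneg termB_bounds[OF assms(1,2)] that by (simp_all add: C_def)
  have summable_iff: "termB q n \<rho> c summable_on multi_idx n \<longleftrightarrow> termD q n \<rho> c summable_on multi_idx n"
    if "0 < \<rho>" for \<rho> c
    using that by (intro summable_on_iff_of_comparable[OF \<open>0 < C\<close>] comparable) simp_all
  have "OqD q n r = OqB q n r"
    unfolding OqD_def OqB_def using summable_iff by blast
  moreover have "C * normD q n \<rho> c \<le> normB q n \<rho> c \<and> normB q n \<rho> c \<le> normD q n \<rho> c"
    if "0 < \<rho>" "ereal \<rho> < r" "c \<in> OqD q n r" for \<rho> c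
    unfolding normD_def normB_def
    using that by (intro infsum_bounds_of_comparable[OF \<open>0 < C\<close>] comparable) (simp_all add: OqD_def)
  ultimately show ?thesis
    by (auto simp: C_def qbase_def)
qed

end
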